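(* Let $\mathcal{X}=(\mathbf{x}_n)_{n=1}^\infty$ be a spreading sequence in a quasi-Banach space $\mathbb{X}$. If $\mathcal{X}$ is not constant, then it is uniformly separated, i.e. $\inf\{\|\mathbf{x}_n-\mathbf{x}_k\|\colon n,k\in\mathbb{N},\ n\ne k\}>0$.
   Context: For a sequence $(\mathbf{x}_n)$ in $\mathbb{X}$, $\mathcal{N}\subseteq\mathbb{N}$ and an injective $\psi\colon\mathcal{N}\to\mathbb{N}$, $\psi$ is a translation if the assignment $\mathbf{x}_n\mapsto\mathbf{x}_{\psi(n)}$, $n\in\mathcal{N}$, defines a linear map on $\operatorname{span}(\mathbf{x}_n\colon n\in\mathcal{N})$ extending to an isomorphism $T_\psi$ from the closed linear span of $\{\mathbf{x}_n\colon n\in\mathcal{N}\}$ onto the closed linear span of $\{\mathbf{x}_n\colon n\in\psi(\mathcal{N})\}$. The sequence is spreading if every increasing map $\psi\colon\mathbb{N}\to\mathbb{N}$ is a translation. *)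

theory Defs
  imports "HOL-Analysis.Analysis"
begin

definition quasi_norm :: "('a::real_vector \<Rightarrow> real) \<Rightarrow> bool" where
  "quasi_norm q \<longleftrightarrow>
     (\<forall>x. 0 \<le> q x) \<and> (\<forall>x. q x = 0 \<longleftrightarrow> x = 0) \<and>
     (\<forall>c x. q (c *\<^sub>R x) = \<bar>c\<bar> * q x) \<and>
     (\<exists>\<kappa>\<ge>1. \<forall>x y. q (x + y) \<le> \<kappa> * (q x + q y))"

definition quasi_banach :: "('a::real_vector \<Rightarrow> real) \<Rightarrow> bool" where
  "quasi_banach q \<longleftrightarrow> quasi_norm q \<and>
     (\<forall>u::nat \<Rightarrow> 'a. (\<forall>\<epsilon>>0. \<exists>N. \<forall>m\<ge>N. \<forall>n\<ge>N. q (u m - u n) < \<epsilon>)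
        \<longrightarrow> (\<exists>l. \<forall>\<epsilon>>0. \<exists>N. \<forall>n\<ge>N. q (u n - l) < \<epsilon>))"

definition qclosure :: "('a::real_vector \<Rightarrow> real) \<Rightarrow> 'a set \<Rightarrow> 'a set" where
  "qclosure q S = {x. \<forall>\<epsilon>>0. \<exists>s\<in>S. q (x - s) < \<epsilon>}"

definition qclosed_span :: "('a::real_vector \<Rightarrow> real) \<Rightarrow> 'a set \<Rightarrow> 'a set" where
  "qclosed_span q S = qclosure q (span S)"

definition q_isomorphism_on ::
  "('a::real_vector \<Rightarrow> real) \<Rightarrow> ('a \<Rightarrow> 'a) \<Rightarrow> 'a set \<Rightarrow> 'a set \<Rightarrow> bool" where
  "q_isomorphism_on q T A B \<longleftrightarrow>
     (\<forall>x\<in>A. \<forall>y\<in>A. T (x + y) = T x + T y) \<and>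
     (\<forall>c. \<forall>x\<in>A. T (c *\<^sub>R x) = c *\<^sub>R T x) \<and>
     inj_on T A \<and> T ` A = B \<and>
     (\<exists>C. \<forall>x\<in>A. q (T x) \<le> C * q x) \<and>
     (\<exists>C. \<forall>x\<in>A. q x \<le> C * q (T x))"

definition translation ::
  "('a::real_vector \<Rightarrow> real) \<Rightarrow> (nat \<Rightarrow> 'a) \<Rightarrow> nat set \<Rightarrow> (nat \<Rightarrow> nat) \<Rightarrow> bool" where
  "translation q x N \<psi> \<longleftrightarrow> inj_on \<psi> N \<and>
     (\<exists>T. (\<forall>n\<in>N. T (x n) = x (\<psi> n)) \<and>
          q_isomorphism_on q T (qclosed_span q (x ` N)) (qclosed_span q (x ` \<psi> ` N)))"

definition spreading :: "('a::real_vector \<Rightarrow> real) \<Rightarrow> (nat \<Rightarrow> 'a) \<Rightarrow> bool" where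
  "spreading q x \<longleftrightarrow> (\<forall>\<psi>. strict_mono \<psi> \<longrightarrow> translation q x UNIV \<psi>)"

end

theory Submission
  imports Defs
begin

text \<open>The shift translations \<open>j \<mapsto> j + s\<close> show
  that two equal consecutive terms would make the sequence constant, so consecutive distances are
  positive. If the sequence were not uniformly separated, shifting would give arbitrarily close
  pairs beyond every index; choosing them inductively yields an increasing \<open>\<psi>\<close> sending the
  \<open>j\<close>-th consecutive pair \<open>(2j, 2j+1)\<close> to a pair whose distance is less than \<open>1/(j+1)\<close> times the
  original one, so no constant bounds the inverse of \<open>T\<^sub>\<psi>\<close>.\<close>

lemma quasi_norm_nonneg: "quasi_norm q \<Longrightarrow> 0 \<le> q v"
  unfolding quasi_norm_def by blast

lemma quasi_norm_eq_0_iff: "quasi_norm q \<Longrightarrow> q v = 0 \<longleftrightarrow> v = 0"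
  unfolding quasi_norm_def by blast

lemma quasi_norm_minus_commute:
  assumes "quasi_norm q"
  shows "q (a - b) = q (b - a)"
proof -
  have "q ((-1) *\<^sub>R (a - b)) = \<bar>-1\<bar> * q (a - b)"
    using assms unfolding quasi_norm_def by blast
  then show ?thesis by simp
qed

lemma span_subset_qclosed_span:
  assumes "quasi_norm q"
  shows "span S \<subseteq> qclosed_span q S"
  unfolding qclosed_span_def qclosure_def
  using quasi_norm_eq_0_iff[OF assms] by force

lemma q_isomorphism_on_diff:
  assumes "q_isomorphism_on q T A B" "u \<in> A" "v \<in> A" "- v \<in> A"
  shows "T (u - v) = T u - T v"
proof -
  have add: "\<forall>y\<in>A. \<forall>z\<in>A. T (y + z) = T y + T z"
    and scale: "\<forall>c. \<forall>y\<in>A. T (c *\<^sub>R y) = c *\<^sub>R T y"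
    using assms(1) unfolding q_isomorphism_on_def by auto
  have "T (u + - v) = T u + T (- v)"
    using add assms(2,4) by blast
  moreover have "T (- v) = - T v"
    using scale assms(3) by (metis scaleR_minus1_left)
  ultimately show ?thesis by simp
qed

lemma translation_diff_bounds:
  assumes qn: "quasi_norm q" and tr: "translation q x N \<psi>"
  obtains C D where
    "\<And>a b. a \<in> N \<Longrightarrow> b \<in> N \<Longrightarrow> q (x a - x b) \<le> C * q (x (\<psi> a) - x (\<psi> b))"
    "\<And>a b. a \<in> N \<Longrightarrow> b \<in> N \<Longrightarrow> q (x (\<psi> a) - x (\<psi> b)) \<le> D * q (x a - x b)"
proof -
  obtain T where T: "\<And>n. n \<in> N \<Longrightarrow> T (x n) = x (\<psi> n)"
    and iso: "q_isomorphism_on q T (qclosed_span q (x ` N)) (qclosed_span q (x ` \<psi> ` N))"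
    using tr unfolding translation_def by blast
  let ?A = "qclosed_span q (x ` N)"
  obtain C where C: "\<And>u. u \<in> ?A \<Longrightarrow> q u \<le> C * q (T u)"
    using iso unfolding q_isomorphism_on_def by blast
  obtain D where D: "\<And>u. u \<in> ?A \<Longrightarrow> q (T u) \<le> D * q u"
    using iso unfolding q_isomorphism_on_def by blast
  have in_A: "v \<in> ?A" if "v \<in> span (x ` N)" for v
    using span_subset_qclosed_span[OF qn] that by blast
  have diff_in_A: "x a - x b \<in> ?A"
    and T_diff: "T (x a - x b) = x (\<psi> a) - x (\<psi> b)" if "a \<in> N" "b \<in> N" for a b
  proof -
    have span: "x a \<in> span (x ` N)" "x b \<in> span (x ` N)"
      using that by (auto intro: span_base)
    then show "x a - x b \<in> ?A"
      by (intro in_A span_diff)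
    have "T (x a - x b) = T (x a) - T (x b)"
      by (rule q_isomorphism_on_diff[OF iso]) (use span in_A span_neg in blast)+
    then show "T (x a - x b) = x (\<psi> a) - x (\<psi> b)"
      using T that by simp
  qed
  show ?thesis
    by (rule that[of C D]) (use C D diff_in_A T_diff in metis)+
qed

lemma spreading_eq_iff:
  assumes "quasi_norm q" "spreading q x" "strict_mono \<psi>"
  shows "x (\<psi> a) = x (\<psi> b) \<longleftrightarrow> x a = x b"
proof -
  obtain C D where
    C: "q (x a - x b) \<le> C * q (x (\<psi> a) - x (\<psi> b))" and
    D: "q (x (\<psi> a) - x (\<psi> b)) \<le> D * q (x a - x b)"
    using assms translation_diff_bounds unfolding spreading_def by (metis UNIV_I)
  show ?thesis
    using C D quasi_norm_nonneg[OF assms(1)] quasi_norm_eq_0_iff[OF assms(1)]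
    by (metis antisym eq_iff_diff_eq_0 mult_zero_right)
qed

lemma spreading_consecutive_neq:
  assumes qn: "quasi_norm q" and spr: "spreading q x" and nonconst: "\<exists>n k. x n \<noteq> x k"
  shows "x n \<noteq> x (Suc n)"
proof
  assume eq: "x n = x (Suc n)"
  have shift: "x (a + s) = x (b + s) \<longleftrightarrow> x a = x b" for a b s
    using spreading_eq_iff[OF qn spr strict_mono_add] .
  have "x m = x (Suc m)" for m
  proof (cases "n \<le> m")
    case True
    then show ?thesis using eq shift[of n "m - n" "Suc n"] by simp
  next
    case False
    then show ?thesis using eq shift[of m "n - m" "Suc m"] by simp
  qed
  then have "x m = x 0" for m
    by (induction m) simp_all
  then show False
    using nonconst by metis
qed

lemma spreading_close_pairs_beyond:
  assumes qn: "quasi_norm q" and spr: "spreading q x"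
    and close: "\<And>e. e > 0 \<Longrightarrow> \<exists>n k. n \<noteq> k \<and> q (x n - x k) < e"
    and "e > 0"
  shows "\<exists>a b. N \<le> a \<and> a < b \<and> q (x a - x b) < e"
proof -
  obtain C D where D: "\<And>a b. q (x (a + N) - x (b + N)) \<le> D * q (x a - x b)"
    using translation_diff_bounds[OF qn] spr strict_mono_add[of N]
    unfolding spreading_def by (metis UNIV_I)
  have "e / (\<bar>D\<bar> + 1) > 0"
    using \<open>e > 0\<close> by simp
  then obtain n k where "n \<noteq> k" and "q (x n - x k) < e / (\<bar>D\<bar> + 1)"
    using close by blast
  then obtain a b where "a < b" and ab: "q (x a - x b) < e / (\<bar>D\<bar> + 1)"
    using quasi_norm_minus_commute[OF qn] by (metis linorder_neqE_nat)
  have "q (x (a + N) - x (b + N)) \<le> \<bar>D\<bar> * q (x a - x b)"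
    using quasi_norm_nonneg[OF qn]
    by (intro order_trans[OF D] mult_right_mono) simp_all
  also have "\<dots> \<le> \<bar>D\<bar> * (e / (\<bar>D\<bar> + 1))"
    using ab by (intro mult_left_mono) simp_all
  also have "\<dots> < e"
    using \<open>e > 0\<close> by (simp add: field_simps)
  finally show ?thesis
    using \<open>a < b\<close> by (intro exI[of _ "a + N"] exI[of _ "b + N"]) simp
qed

lemma strict_mono_interleave:
  fixes P :: "nat \<Rightarrow> nat \<Rightarrow> nat \<Rightarrow> bool"
  assumes "\<And>j N. \<exists>a b. N \<le> a \<and> a < b \<and> P j a b"
  obtains \<psi> where "strict_mono \<psi>" "\<And>j. P j (\<psi> (2 * j)) (\<psi> (Suc (2 * j)))"
proof -
  obtain f where
    f: "\<And>j N. N \<le> fst (f j N) \<and> fst (f j N) < snd (f j N) \<and> P j (fst (f j N)) (snd (f j N))"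
  proof -
    have "\<forall>j N. \<exists>p. N \<le> fst p \<and> fst p < snd p \<and> P j (fst p) (snd p)"
      using assms by fastforce
    then show ?thesis
      using that by metis
  qed
  define p where "p = rec_nat (f 0 0) (\<lambda>j p. f (Suc j) (Suc (snd p)))"
  have p_Suc: "p (Suc j) = f (Suc j) (Suc (snd (p j)))" for j
    unfolding p_def by simp
  have p: "fst (p j) < snd (p j) \<and> P j (fst (p j)) (snd (p j))" for j
    by (cases j) (simp_all add: p_def f)
  have p_next: "snd (p j) < fst (p (Suc j))" for j
    using f[where j = "Suc j" and N = "Suc (snd (p j))"] p_Suc by simp
  define \<psi> where "\<psi> i = (if even i then fst (p (i div 2)) else snd (p (i div 2)))" for i
  have "strict_mono \<psi>"
  proof (rule strict_monoI_Suc)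
    fix i
    show "\<psi> i < \<psi> (Suc i)"
    proof (cases "even i")
      case True
      then have "Suc i div 2 = i div 2" by presburger
      then show ?thesis using True p unfolding \<psi>_def by simp
    next
      case False
      then have "Suc i div 2 = Suc (i div 2)" by presburger
      then show ?thesis using False p_next unfolding \<psi>_def by simp
    qed
  qed
  moreover have "P j (\<psi> (2 * j)) (\<psi> (Suc (2 * j)))" for j
    using p unfolding \<psi>_def by simp
  ultimately show ?thesis by (rule that)
qed

lemma spreading_no_close_pairs_beyond:
  assumes qn: "quasi_norm q" and spr: "spreading q x" and neq: "\<And>n. x n \<noteq> x (Suc n)"
  shows "\<not> (\<forall>e>0. \<forall>N. \<exists>a b. N \<le> a \<and> a < b \<and> q (x a - x b) < e)"
proof
  define d where "d j = q (x (2 * j) - x (Suc (2 * j)))" for j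
  have d_pos: "d j > 0" for j
    using neq[of "2 * j"] quasi_norm_nonneg[OF qn] quasi_norm_eq_0_iff[OF qn]
    unfolding d_def by (metis eq_iff_diff_eq_0 less_le)
  assume "\<forall>e>0. \<forall>N. \<exists>a b. N \<le> a \<and> a < b \<and> q (x a - x b) < e"
  then have "\<exists>a b. N \<le> a \<and> a < b \<and> q (x a - x b) < d j / (real j + 1)" for j N
    using d_pos by simp
  then obtain \<psi> where "strict_mono \<psi>"
    and close: "\<And>j. q (x (\<psi> (2 * j)) - x (\<psi> (Suc (2 * j)))) < d j / (real j + 1)"
    using strict_mono_interleave[where P = "\<lambda>j a b. q (x a - x b) < d j / (real j + 1)"]
    by blast
  then obtain C where C: "\<And>a b. q (x a - x b) \<le> C * q (x (\<psi> a) - x (\<psi> b))"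
    using translation_diff_bounds[OF qn] spr unfolding spreading_def by (metis UNIV_I)
  define j where "j = nat \<lceil>C\<rceil>"
  let ?e = "q (x (\<psi> (2 * j)) - x (\<psi> (Suc (2 * j))))"
  have "d j \<le> C * ?e"
    using C unfolding d_def .
  also have "\<dots> \<le> (real j + 1) * ?e"
    using quasi_norm_nonneg[OF qn] unfolding j_def by (intro mult_right_mono) linarith+
  also have "\<dots> < d j"
    using close[of j] by (simp add: field_simps)
  finally show False by simp
qed

theorem lemma2p3:
  fixes q :: "'a::real_vector \<Rightarrow> real" and x :: "nat \<Rightarrow> 'a"
  assumes "quasi_banach q"
    and "spreading q x"
    and "\<exists>n k. x n \<noteq> x k"
  shows "Inf {q (x n - x k) | n k. n \<noteq> k} > 0"
proof (rule ccontr)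
  let ?S = "{q (x n - x k) | n k. n \<noteq> k}"
  have qn: "quasi_norm q"
    using assms(1) unfolding quasi_banach_def by blast
  assume "\<not> Inf ?S > 0"
  moreover have "?S \<noteq> {}" "bdd_below ?S"
    using quasi_norm_nonneg[OF qn] by (auto intro!: bdd_belowI[of _ 0])
  ultimately have "\<exists>n k. n \<noteq> k \<and> q (x n - x k) < e" if "e > 0" for e
    using that cInf_less_iff[of ?S e] by fastforce
  then have "\<forall>e>0. \<forall>N. \<exists>a b. N \<le> a \<and> a < b \<and> q (x a - x b) < e"
    using spreading_close_pairs_beyond[OF qn assms(2)] by blast
  then show False
    using spreading_no_close_pairs_beyond[OF qn assms(2)]
      spreading_consecutive_neq[OF qn assms(2,3)] by blast
qed

end
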